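(* Let $\lambda$ be a partition, $n\ge\ell(\lambda)$, and $M\in\mathrm{MLQ}(\lambda,n)$. Then $\operatorname{maj}(M)=\operatorname{charge}(\mathrm{cw}(M))$.
   Context: For a partition $\lambda$, $\lambda'$ is the conjugate partition. For $L=\lambda_1$ and $n\ge\ell(\lambda)$, $\mathrm{MLQ}(\lambda,n)$ is the set of tuples $M=(B_1,\dots,B_L)$ of subsets of $[n]$ with $|B_j|=\lambda'_j$, drawn as an $L\times n$ grid with rows $1..L$ bottom to top, columns $1..n$ left to right, a ball in cell $(r,j)$ iff $j\in B_r$. The column word $\mathrm{cw}(M)$ scans columns left to right and, within each column, top to bottom, recording the row number of each ball (so it has content $\lambda'$). Major index (Ferrari–Martin labelling). For $r=L,\dots,2$: every unlabelled ball of row $r$ gets label $r$; then the balls of row $r$, in decreasing label order (left to right among equal labels), are each paired with the first unlabelled ball of row $r-1$ weakly to the right, scanning cyclically ($j,j+1,\dots,n,1,\dots$); that ball gets the same label; the pairing wraps if the lower ball is in a column strictly left of the upper ball. Unlabelled balls in row 1 get label 1. $\operatorname{maj}(M)=\sum(\ell(p)-r(p)+1)$ over wrapping pairings $p$, $r(p)$ the row of the upper ball, $\ell(p)$ its label. Charge. For a permutation $\tau$ of $[m]$ in one-line notation, $\operatorname{charge}(\tau)=\sum(m-i)$ over $i\in[m-1]$ such that $i$ is to the left of $i+1$. For a word $w$ with letters $1,\dots,k$ whose multiplicities are weakly decreasing ($\#1\ge\#2\ge\cdots$), extract the first charge subword by locating the leftmost occurrence of $k$, then the next occurrence of $k-1$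 to its right cyclically (wrapping to the beginning if needed), then of $k-2$, …, down to $1$; these letters in positional order form a permutation $w^{(1)}$ of $[k]$. Remove them and repeat with the remaining letters to obtain $w^{(2)},\dots$. Then $\operatorname{charge}(w)=\sum_i\operatorname{charge}(w^{(i)})$. *)

theory Defs
  imports Main
begin

definition is_partition :: "nat list \<Rightarrow> bool" where
  "is_partition lam \<longleftrightarrow> sorted_wrt (\<ge>) lam \<and> (\<forall>x\<in>set lam. 0 < x)"

definition first_part :: "nat list \<Rightarrow> nat" where
  "first_part lam = (if lam = [] then 0 else hd lam)"

definition conj_part :: "nat list \<Rightarrow> nat \<Rightarrow> nat" where
  "conj_part lam j = length (filter (\<lambda>x. j \<le> x) lam)"

text \<open>An element M = (B_1,...,B_L) is a list of length L; row r is the set M ! (r-1).\<close>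
definition MLQ :: "nat list \<Rightarrow> nat \<Rightarrow> nat set list set" where
  "MLQ lam n = {M. length M = first_part lam \<and>
      (\<forall>r\<in>{1..first_part lam}. M ! (r - 1) \<subseteq> {1..n} \<and> card (M ! (r - 1)) = conj_part lam r)}"

definition row :: "nat set list \<Rightarrow> nat \<Rightarrow> nat set" where
  "row M r = M ! (r - 1)"

text \<open>Column word: columns 1..n left to right, within a column rows from top (L) to bottom (1).\<close>
definition col_word :: "nat set list \<Rightarrow> nat \<Rightarrow> nat list" where
  "col_word M n = concat (map (\<lambda>j. filter (\<lambda>r. j \<in> row M r) (rev [1..<length M + 1])) [1..<n + 1])"

text \<open>Labels of the balls in a row are stored as a function column \<Rightarrow> label,
  where 0 means "not yet labelled" (genuine labels are \<ge> 1).\<close>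

definition next_free :: "nat set \<Rightarrow> (nat \<Rightarrow> nat) \<Rightarrow> nat \<Rightarrow> nat" where
  "next_free B low j =
     (if \<exists>c\<in>B. j \<le> c \<and> low c = 0
      then (LEAST c. c \<in> B \<and> j \<le> c \<and> low c = 0)
      else (LEAST c. c \<in> B \<and> low c = 0))"

text \<open>Pair the ball of row r in column j (with label up j) to row r-1 (set B);
  state = (labels of row r-1, accumulated maj).\<close>
definition pair_step :: "nat set \<Rightarrow> nat \<Rightarrow> (nat \<Rightarrow> nat) \<Rightarrow> nat \<Rightarrow> (nat \<Rightarrow> nat) \<times> nat \<Rightarrow> (nat \<Rightarrow> nat) \<times> nat" where
  "pair_step B r up j st =
     (let low = fst st; m = snd st; c = next_free B low j; l = up j
      in (low(c := l), m + (if c < j then l + 1 - r else 0)))"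

text \<open>maj_state M d: after processing rows L, L-1, ..., L-d+1, the labels of row L-d
  (0 = unlabelled) and the accumulated maj.\<close>
primrec maj_state :: "nat set list \<Rightarrow> nat \<Rightarrow> (nat \<Rightarrow> nat) \<times> nat" where
  "maj_state M 0 = (\<lambda>_. 0, 0)"
| "maj_state M (Suc d) =
     (let r = length M - d;
          low = fst (maj_state M d);
          m = snd (maj_state M d);
          up = (\<lambda>j. if low j = 0 then r else low j);
          order = sort_key (\<lambda>j. - int (up j)) (sorted_list_of_set (row M r))
      in fold (pair_step (row M (r - 1)) r up) order (\<lambda>_. 0, m))"

text \<open>Rows L, ..., 2 are processed, i.e. L-1 rows. (sort_key is stable, so equal labels
  are taken left to right.)\<close>
definition maj :: "nat set list \<Rightarrow> nat" where
  "maj M = snd (maj_state M (length M - 1))"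

text \<open>Charge of a permutation tau of [m] in one-line notation.\<close>
definition perm_charge :: "nat list \<Rightarrow> nat" where
  "perm_charge tau = (\<Sum>i\<in>{1..<length tau}.
      if (\<exists>a b. a < b \<and> b < length tau \<and> tau ! a = i \<and> tau ! b = Suc i)
      then length tau - i else 0)"

definition cyc_next :: "nat list \<Rightarrow> nat set \<Rightarrow> nat \<Rightarrow> nat \<Rightarrow> nat" where
  "cyc_next w S q i =
     (if \<exists>p\<in>S. q < p \<and> w ! p = i
      then (LEAST p. p \<in> S \<and> q < p \<and> w ! p = i)
      else (LEAST p. p \<in> S \<and> w ! p = i))"

primrec charge_chain :: "nat list \<Rightarrow> nat set \<Rightarrow> nat \<Rightarrow> nat \<Rightarrow> nat" where
  "charge_chain w S k 0 = (LEAST p. p \<in> S \<and> w ! p = k)"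
| "charge_chain w S k (Suc d) = cyc_next w S (charge_chain w S k d) (k - Suc d)"

text \<open>Repeatedly extract charge subwords from the remaining positions S
  (the fuel argument bounds the number of rounds; each round removes \<ge> 1 position).\<close>
primrec charge_aux :: "nat list \<Rightarrow> nat \<Rightarrow> nat set \<Rightarrow> nat" where
  "charge_aux w 0 S = 0"
| "charge_aux w (Suc f) S =
     (if S = {} then 0 else
      (let k = Max ((!) w ` S);
           P = charge_chain w S k ` {..<k};
           tau = map ((!) w) (sorted_list_of_set P)
       in perm_charge tau + charge_aux w f (S - P)))"

definition charge :: "nat list \<Rightarrow> nat" where
  "charge w = charge_aux w (length w) {..<length w}"

end

theory Submission
  imports Defs
begin

text \<open>Both sides split off the same chain of balls and recurse on the rest. Let \<open>k\<close> be the highest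
  nonempty row; start at the leftmost ball of row \<open>k\<close> and descend, moving each time to the first ball
  of the next row weakly to the right, cyclically. In the column word this chain is exactly the first
  charge subword, and there \<open>i\<close> precedes \<open>i + 1\<close> iff the step from row \<open>i + 1\<close> to row \<open>i\<close> wraps
  around, so the charge of the subword, the sum of \<open>k - i\<close> over these \<open>i\<close>, is the contribution of
  the wrapping steps to \<open>maj\<close>.

  In the labelling all balls of row \<open>k\<close> carry label \<open>k\<close>, and pairing balls of equal label in a
  different order changes neither the resulting labels nor \<open>maj\<close>. Hence the chain can be paired
  first in every row, after which the remaining pairings are those of the multiline queue with the
  chain removed. Its rows still shrink upwards, and induction on the number of balls concludes.\<close>

section \<open>Cyclic search\<close>

lemma Least_nat_eq_iff:
  assumes "P c"
  shows "(LEAST c::nat. P c) = x \<longleftrightarrow> P x \<and> (\<forall>c. P c \<longrightarrow> x \<le> c)"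
  using assms by (metis LeastI Least_equality Least_le)

definition cyclic_next :: "nat set \<Rightarrow> nat \<Rightarrow> nat" where
  "cyclic_next F j = (if \<exists>c\<in>F. j \<le> c then LEAST c. c \<in> F \<and> j \<le> c else LEAST c. c \<in> F)"

lemma cyclic_next_eq_iff:
  assumes "F \<noteq> {}"
  shows "cyclic_next F j = x \<longleftrightarrow>
    x \<in> F \<and> (j \<le> x \<and> (\<forall>c\<in>F. j \<le> c \<longrightarrow> x \<le> c) \<or> (\<forall>c\<in>F. c < j \<and> x \<le> c))"
proof (cases "\<exists>c\<in>F. j \<le> c")
  case True
  then obtain c0 where "c0 \<in> F" "j \<le> c0" by blast
  then have "cyclic_next F j = x \<longleftrightarrow> (x \<in> F \<and> j \<le> x) \<and> (\<forall>c. c \<in> F \<and> j \<le> c \<longrightarrow> x \<le> c)"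
    unfolding cyclic_next_def using True Least_nat_eq_iff[of "\<lambda>c. c \<in> F \<and> j \<le> c" c0 x] by simp
  with True show ?thesis
    by (meson not_le)
next
  case False
  obtain c0 where "c0 \<in> F" using assms by blast
  then have "cyclic_next F j = x \<longleftrightarrow> x \<in> F \<and> (\<forall>c. c \<in> F \<longrightarrow> x \<le> c)"
    unfolding cyclic_next_def using False Least_nat_eq_iff[of "\<lambda>c. c \<in> F" c0 x] by simp
  with False show ?thesis
    by (meson not_le)
qed

lemma cyclic_next_in: "F \<noteq> {} \<Longrightarrow> cyclic_next F j \<in> F"
  using cyclic_next_eq_iff by blast

lemma cyclic_next_Diff_other:
  assumes "y \<in> F" "y \<noteq> cyclic_next F j"
  shows "cyclic_next (F - {y}) j = cyclic_next F j"
proof -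
  have F: "F \<noteq> {}"
    using assms(1) by blast
  have x: "cyclic_next F j \<in> F"
    "j \<le> cyclic_next F j \<and> (\<forall>c\<in>F. j \<le> c \<longrightarrow> cyclic_next F j \<le> c) \<or> (\<forall>c\<in>F. c < j \<and> cyclic_next F j \<le> c)"
    using iffD1[OF cyclic_next_eq_iff[OF F] refl] by blast+
  then have "cyclic_next F j \<in> F - {y}"
    using assms(2) by blast
  with x(2) show ?thesis
    by (subst cyclic_next_eq_iff) blast+
qed

lemma cyclic_next_cong:
  assumes "\<And>c. c \<in> F \<Longrightarrow> j \<le> c \<longleftrightarrow> j' \<le> c"
  shows "cyclic_next F j = cyclic_next F j'"
proof -
  have "(\<exists>c\<in>F. j \<le> c) = (\<exists>c\<in>F. j' \<le> c)" "(\<lambda>c. c \<in> F \<and> j \<le> c) = (\<lambda>c. c \<in> F \<and> j' \<le> c)"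
    using assms by blast+
  then show ?thesis
    unfolding cyclic_next_def by (simp only:)
qed

lemma cyclic_next_wrap: "\<forall>c\<in>F. c < j \<Longrightarrow> cyclic_next F j = cyclic_next F 0"
  unfolding cyclic_next_def by (auto simp: not_le)

lemma cyclic_next_Diff_self:
  assumes "F \<noteq> {}" "x = cyclic_next F j"
  shows "cyclic_next (F - {x}) j = cyclic_next (F - {x}) (Suc x)"
proof -
  have x: "x \<in> F" "j \<le> x \<and> (\<forall>c\<in>F. j \<le> c \<longrightarrow> x \<le> c) \<or> (\<forall>c\<in>F. c < j \<and> x \<le> c)"
    using iffD1[OF cyclic_next_eq_iff[OF assms(1)] assms(2)[symmetric]] by blast+
  then have above_x: "Suc x \<le> c" if "c \<in> F - {x}" "j \<le> c \<or> (\<forall>c\<in>F. c < j)" for c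
    using that by (metis DiffE Suc_leI insertCI le_neq_implies_less not_le)
  show ?thesis
  proof (cases "\<forall>c\<in>F. c < j")
    case True
    then have "cyclic_next (F - {x}) j = cyclic_next (F - {x}) 0"
      by (intro cyclic_next_wrap) blast
    also have "\<dots> = cyclic_next (F - {x}) (Suc x)"
      using True above_x by (intro cyclic_next_cong) auto
    finally show ?thesis .
  next
    case False
    with x(2) have "j \<le> x"
      by blast
    then show ?thesis
      using above_x by (intro cyclic_next_cong) force
  qed
qed

text \<open>Reading \<open>F\<close> cyclically from \<open>j\<close> begins at \<open>x = cyclic_next F j\<close>, so reaching \<open>y\<close> requires a
  wrap-around iff reaching \<open>x\<close> does or \<open>y < x\<close>.\<close>
lemma cyclic_next_wrap_split:
  assumes "y \<in> F" "y \<noteq> cyclic_next F j"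
  shows "of_bool (y < j) = of_bool (cyclic_next F j < j) + (of_bool (y < cyclic_next F j) :: nat)"
proof -
  have "F \<noteq> {}"
    using assms(1) by blast
  from iffD1[OF cyclic_next_eq_iff[OF this] refl, of j]
  show ?thesis
    using assms by (cases "y < j"; cases "cyclic_next F j < j") (auto simp: not_le)
qed

section \<open>Labelling one row\<close>

definition unlabelled :: "nat set \<Rightarrow> (nat \<Rightarrow> nat) \<Rightarrow> nat set" where
  "unlabelled B low = {c \<in> B. low c = 0}"

lemma next_free_eq_cyclic_next: "next_free B low j = cyclic_next (unlabelled B low) j"
proof -
  have "(\<lambda>c. c \<in> B \<and> j \<le> c \<and> low c = 0) = (\<lambda>c. c \<in> unlabelled B low \<and> j \<le> c)"
    "(\<lambda>c. c \<in> B \<and> low c = 0) = (\<lambda>c. c \<in> unlabelled B low)"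
    by (auto simp: unlabelled_def)
  then show ?thesis
    unfolding next_free_def cyclic_next_def Bex_def by (simp only:)
qed

lemma unlabelled_upd: "l \<noteq> 0 \<Longrightarrow> unlabelled B (low(x := l)) = unlabelled B low - {x}"
  unfolding unlabelled_def by auto

lemma pair_step_eq:
  "pair_step B r up j st =
     (let x = cyclic_next (unlabelled B (fst st)) j
      in ((fst st)(x := up j), snd st + (if x < j then up j + 1 - r else 0)))"
  unfolding pair_step_def next_free_eq_cyclic_next Let_def ..

lemma card_unlabelled_pair_step:
  assumes "finite B" "unlabelled B (fst st) \<noteq> {}" "up j \<noteq> 0"
  shows "card (unlabelled B (fst (pair_step B r up j st))) = card (unlabelled B (fst st)) - 1"
  using assms cyclic_next_in by (simp add: pair_step_eq Let_def unlabelled_upd)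

lemma pair_step_twice:
  fixes B :: "nat set" and low :: "nat \<Rightarrow> nat"
  assumes "up j = l" "up j' = l" "l \<noteq> 0"
  defines "x \<equiv> cyclic_next (unlabelled B low) j"
  defines "y \<equiv> cyclic_next (unlabelled B low - {x}) j'"
  shows "pair_step B r up j' (pair_step B r up j (low, m)) =
    (low(x := l, y := l), m + (if x < j then l + 1 - r else 0) + (if y < j' then l + 1 - r else 0))"
  using assms by (simp add: pair_step_eq Let_def unlabelled_upd)

lemma pair_step_commute:
  assumes "2 \<le> card (unlabelled B (fst st))" "up j1 = up j2" "up j1 \<noteq> 0"
  shows "pair_step B r up j2 (pair_step B r up j1 st) = pair_step B r up j1 (pair_step B r up j2 st)"
proof -
  obtain low m where st: "st = (low, m)"
    by fastforce
  define F where "F = unlabelled B low"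
  define x1 where "x1 = cyclic_next F j1"
  define x2 where "x2 = cyclic_next F j2"
  note twice = pair_step_twice[where j=j1 and j'=j2 and l="up j1"]
    pair_step_twice[where j=j2 and j'=j1 and l="up j1"]
  have "F \<noteq> {}"
    using assms(1) st F_def by auto
  then have x12: "x1 \<in> F" "x2 \<in> F"
    unfolding x1_def x2_def by (simp_all add: cyclic_next_in)
  show ?thesis
  proof (cases "x1 = x2")
    case False
    then have "cyclic_next (F - {x1}) j2 = x2" "cyclic_next (F - {x2}) j1 = x1"
      using cyclic_next_Diff_other x12 unfolding x1_def x2_def by metis+
    with False show ?thesis
      using assms(2,3) by (simp add: st twice F_def[symmetric] x1_def[symmetric] x2_def[symmetric] fun_upd_twist)
  next
    case True
    define s where "s = cyclic_next (F - {x1}) (Suc x1)"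
    have "F \<subseteq> {x1} \<Longrightarrow> card F \<le> 1"
      using card_mono[of "{x1}" F] by simp
    then have "s \<in> F - {x1}"
      unfolding s_def using assms(1) st F_def by (intro cyclic_next_in) auto
    have s: "cyclic_next (F - {x1}) j = s" "of_bool (s < j) = of_bool (x1 < j) + (of_bool (s < x1) :: nat)"
      if "j \<in> {j1, j2}" for j
    proof -
      have x1: "x1 = cyclic_next F j"
        using that True unfolding x1_def x2_def by auto
      show "cyclic_next (F - {x1}) j = s"
        unfolding s_def using \<open>F \<noteq> {}\<close> x1 by (rule cyclic_next_Diff_self)
      show "of_bool (s < j) = of_bool (x1 < j) + (of_bool (s < x1) :: nat)"
        using cyclic_next_wrap_split[of s F j] \<open>s \<in> F - {x1}\<close> x1 by simp
    qed
    have wrap: "(if s < j then c else 0) = (if x1 < j then c else 0) + (if s < x1 then c else 0)"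
      if "j \<in> {j1, j2}" for j and c :: nat
      using s(2)[OF that] by (cases "s < j"; cases "x1 < j"; cases "s < x1") simp_all
    show ?thesis
      using True s(1) assms(2,3)
      by (simp add: st twice F_def[symmetric] x1_def[symmetric] x2_def[symmetric] wrap[of j1] wrap[of j2])
  qed
qed

lemma fold_pair_step_move_to_front:
  assumes "finite B" "\<forall>y\<in>set ys. up y = up x" "up x \<noteq> 0"
    and "length (ys @ x # zs) \<le> card (unlabelled B (fst st))"
  shows "fold (pair_step B r up) (ys @ x # zs) st = fold (pair_step B r up) (x # ys @ zs) st"
  using assms(2,4)
proof (induction ys arbitrary: st)
  case Nil
  then show ?case by simp
next
  case (Cons y ys)
  have ne: "unlabelled B (fst st) \<noteq> {}"
    using Cons.prems(2) by auto
  have "pair_step B r up x (pair_step B r up y st) = pair_step B r up y (pair_step B r up x st)"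
    using Cons.prems assms(1,3) by (intro pair_step_commute) auto
  moreover have "fold (pair_step B r up) (ys @ x # zs) (pair_step B r up y st) =
      fold (pair_step B r up) (x # ys @ zs) (pair_step B r up y st)"
    using Cons.prems card_unlabelled_pair_step[OF assms(1) ne] assms(3) by (intro Cons.IH) auto
  ultimately show ?case
    by simp
qed

lemma fold_pair_step_le:
  assumes "\<forall>j. fst st j \<le> k" "\<forall>j\<in>set xs. up j \<le> k"
  shows "fst (fold (pair_step B r up) xs st) j \<le> k"
  using assms by (induction xs arbitrary: st) (auto simp: pair_step_eq Let_def)

text \<open>A lower ball \<open>c\<close> that is already labelled is invisible to the remaining pairings.\<close>
lemma fold_pair_step_Diff:
  assumes "finite B" "fst st c \<noteq> 0" "fst st' = (fst st)(c := 0)"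
    and "\<forall>j\<in>set xs. up' j = up j \<and> up j \<noteq> 0" "length xs \<le> card (unlabelled B (fst st))"
  shows "fst (fold (pair_step (B - {c}) r up') xs st') = (fst (fold (pair_step B r up) xs st))(c := 0)
    \<and> fst (fold (pair_step B r up) xs st) c = fst st c
    \<and> snd (fold (pair_step B r up) xs st) + snd st' = snd (fold (pair_step (B - {c}) r up') xs st') + snd st"
  using assms(2-)
proof (induction xs arbitrary: st st')
  case Nil
  then show ?case by simp
next
  case (Cons a xs)
  define F where "F = unlabelled B (fst st)"
  define x where "x = cyclic_next F a"
  have F': "unlabelled (B - {c}) (fst st') = F"
    using Cons.prems(1,2) unfolding F_def unlabelled_def by auto
  have "F \<noteq> {}"
    using Cons.prems(4) F_def by auto
  then have "x \<in> F"
    unfolding x_def by (rule cyclic_next_in)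
  then have "x \<noteq> c"
    using Cons.prems(1) F_def unlabelled_def by auto
  have up: "up' a = up a" "up a \<noteq> 0"
    using Cons.prems(3) by auto
  have step: "pair_step B r up a st = ((fst st)(x := up a), snd st + (if x < a then up a + 1 - r else 0))"
    "pair_step (B - {c}) r up' a st' = ((fst st')(x := up a), snd st' + (if x < a then up a + 1 - r else 0))"
    by (simp_all add: pair_step_eq Let_def F' up(1) F_def[symmetric] x_def[symmetric])
  have card_step: "card (unlabelled B (fst (pair_step B r up a st))) = card F - 1"
    using card_unlabelled_pair_step[OF assms(1)] \<open>F \<noteq> {}\<close> up(2) unfolding F_def by blast
  have "fst (pair_step B r up a st) c \<noteq> 0"
    "fst (pair_step (B - {c}) r up' a st') = (fst (pair_step B r up a st))(c := 0)"
    "\<forall>j\<in>set xs. up' j = up j \<and> up j \<noteq> 0"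
    "length xs \<le> card (unlabelled B (fst (pair_step B r up a st)))"
    using Cons.prems \<open>x \<noteq> c\<close> card_step by (auto simp: step fun_upd_twist F_def)
  from Cons.IH[OF this] \<open>x \<noteq> c\<close> show ?case
    by (simp add: step)
qed

lemma sort_key_cong: "(\<And>x. x \<in> set xs \<Longrightarrow> f x = g x) \<Longrightarrow> sort_key f xs = sort_key g xs"
proof (induction xs)
  case (Cons a xs)
  have "insort_key f a ys = insort_key g a ys" if "set ys \<subseteq> set (a # xs)" for ys
    using that Cons.prems by (induction ys) auto
  moreover have "set (sort_key g xs) \<subseteq> set (a # xs)"
    by auto
  ultimately show ?case
    using Cons by simp
qed simp

definition label_row ::
    "nat set \<Rightarrow> nat set \<Rightarrow> nat \<Rightarrow> (nat \<Rightarrow> nat) \<Rightarrow> nat \<Rightarrow> (nat \<Rightarrow> nat) \<times> nat" where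
  "label_row A B r up m =
    fold (pair_step B r up) (sort_key (\<lambda>j. - int (up j)) (sorted_list_of_set A)) (\<lambda>_. 0, m)"

lemma label_row_pair_first:
  assumes "finite A" "finite B" "c \<in> A" "card A \<le> card B" "\<forall>j. up j \<le> up c" "up c \<noteq> 0"
  shows "label_row A B r up m =
    fold (pair_step B r up) (sort_key (\<lambda>j. - int (up j)) (sorted_list_of_set (A - {c})))
      (pair_step B r up c (\<lambda>_. 0, m))"
proof -
  define order where "order = sort_key (\<lambda>j. - int (up j)) (sorted_list_of_set A)"
  have "distinct order" "set order = A" "length order = card A"
    using assms(1) by (simp_all add: order_def)
  then obtain ys zs where split: "order = ys @ c # zs"
    using assms(3) split_list by metis
  then have "c \<notin> set ys" "c \<notin> set zs"
    using \<open>distinct order\<close> by auto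
  have "sorted (map (\<lambda>j. - int (up j)) (ys @ c # zs))"
    unfolding split(1)[symmetric] order_def by simp
  then have "\<forall>y\<in>set ys. up y = up c"
    using assms(5) by (auto simp: sorted_append intro: le_antisym)
  then have "label_row A B r up m = fold (pair_step B r up) (c # ys @ zs) (\<lambda>_. 0, m)"
    unfolding label_row_def order_def[symmetric] split(1)
    using assms \<open>length order = card A\<close> split(1)
    by (intro fold_pair_step_move_to_front) (auto simp: unlabelled_def)
  moreover have "sort_key (\<lambda>j. - int (up j)) (sorted_list_of_set (A - {c})) = ys @ zs"
  proof -
    have "sorted_list_of_set (A - {c}) = filter (\<lambda>y. c \<noteq> y) (sorted_list_of_set A)"
      using assms(1) by (simp add: sorted_list_of_set_remove distinct_remove1_removeAll removeAll_filter_not_eq)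
    moreover have "filter (\<lambda>y. c \<noteq> y) ys = ys" "filter (\<lambda>y. c \<noteq> y) zs = zs"
      using \<open>c \<notin> set ys\<close> \<open>c \<notin> set zs\<close> by (auto simp: filter_id_conv)
    ultimately show ?thesis
      using split by (simp add: filter_sort[symmetric] order_def[symmetric])
  qed
  ultimately show ?thesis
    by simp
qed

text \<open>Balls of equal label may be paired in any order, so a ball \<open>c\<close> of maximal label can be paired
  first; it takes \<open>cyclic_next B c\<close>, and the rest of the row is paired as if both were absent.\<close>
lemma label_row_Diff_pair:
  assumes "finite A" "finite B" "c \<in> A" "card A \<le> card B"
    and "up c = k" "\<forall>j. up j \<le> k" "\<forall>j\<in>A. up j \<noteq> 0" "\<forall>j. j \<noteq> c \<longrightarrow> up' j = up j"
  defines "c' \<equiv> cyclic_next B c"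
  shows "fst (label_row (A - {c}) (B - {c'}) r up' m') = (fst (label_row A B r up m))(c' := 0)
    \<and> fst (label_row A B r up m) c' = k \<and> (\<forall>j. fst (label_row A B r up m) j \<le> k)
    \<and> snd (label_row A B r up m) + m' =
      snd (label_row (A - {c}) (B - {c'}) r up' m') + m + (if c' < c then k + 1 - r else 0)"
proof -
  define rest where "rest = sort_key (\<lambda>j. - int (up j)) (sorted_list_of_set (A - {c}))"
  define st where "st = ((\<lambda>_. 0::nat)(c' := k), m + (if c' < c then k + 1 - r else 0))"
  have "k \<noteq> 0"
    using assms(3,5,7) by auto
  have "B \<noteq> {}"
    using assms(1,3,4) by auto
  then have "c' \<in> B"
    unfolding c'_def by (rule cyclic_next_in)
  have "unlabelled B (\<lambda>_. 0) = B"
    by (simp add: unlabelled_def)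
  then have "pair_step B r up c (\<lambda>_. 0, m) = st"
    by (simp add: pair_step_eq Let_def st_def c'_def assms(5))
  moreover have "label_row A B r up m = fold (pair_step B r up) rest (pair_step B r up c (\<lambda>_. 0, m))"
    unfolding rest_def using assms(5,6) \<open>k \<noteq> 0\<close> by (intro label_row_pair_first[OF assms(1-4)]) auto
  ultimately have row: "label_row A B r up m = fold (pair_step B r up) rest st"
    by simp
  have "sort_key (\<lambda>j. - int (up' j)) (sorted_list_of_set (A - {c})) = rest"
    unfolding rest_def using assms(1,8) by (intro sort_key_cong) simp
  then have row': "label_row (A - {c}) (B - {c'}) r up' m' = fold (pair_step (B - {c'}) r up') rest (\<lambda>_. 0, m')"
    unfolding label_row_def by simp
  have "unlabelled B (fst st) = B - {c'}"
    using \<open>k \<noteq> 0\<close> by (auto simp: st_def unlabelled_def)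
  then have len: "length rest \<le> card (unlabelled B (fst st))"
    using assms(1-4) \<open>c' \<in> B\<close> by (simp add: rest_def diff_le_mono)
  have up': "\<forall>j\<in>set rest. up' j = up j \<and> up j \<noteq> 0"
    using assms(1,7,8) by (simp add: rest_def)
  have st: "fst st c' \<noteq> 0" "fst (\<lambda>_. 0::nat, m') = (fst st)(c' := 0)"
    using \<open>k \<noteq> 0\<close> by (auto simp: st_def)
  note fold_pair_step_Diff[OF assms(2) st up' len]
  moreover have "\<forall>j. fst (fold (pair_step B r up) rest st) j \<le> k"
    using assms(6) by (intro allI fold_pair_step_le) (auto simp: st_def)
  ultimately show ?thesis
    unfolding row row' by (simp add: st_def)
qed

section \<open>Removing the leading chain\<close>

definition decreasing_rows :: "nat set list \<Rightarrow> bool" where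
  "decreasing_rows R \<longleftrightarrow> (\<forall>r\<in>{1..length R}. finite (row R r)) \<and>
     (\<forall>r. 1 \<le> r \<longrightarrow> r < length R \<longrightarrow> card (row R (Suc r)) \<le> card (row R r))"

definition balls :: "nat set list \<Rightarrow> (nat \<times> nat) set" where
  "balls R = (SIGMA r:{1..length R}. row R r)"

lemma mem_balls: "(r, c) \<in> balls R \<longleftrightarrow> r \<in> {1..length R} \<and> c \<in> row R r"
  by (simp add: balls_def)

definition top_row :: "nat set list \<Rightarrow> nat" where
  "top_row R = Max {r \<in> {1..length R}. row R r \<noteq> {}}"

primrec chain_descent :: "nat set list \<Rightarrow> nat \<Rightarrow> nat \<Rightarrow> nat" where
  "chain_descent R k 0 = Min (row R k)"
| "chain_descent R k (Suc d) = cyclic_next (row R (k - Suc d)) (chain_descent R k d)"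

definition chain_col :: "nat set list \<Rightarrow> nat \<Rightarrow> nat \<Rightarrow> nat" where
  "chain_col R k r = chain_descent R k (k - r)"

definition chain_weight :: "nat set list \<Rightarrow> nat \<Rightarrow> nat \<Rightarrow> nat" where
  "chain_weight R k r = (if chain_col R k (r - 1) < chain_col R k r then k + 1 - r else 0)"

definition remove_chain :: "nat set list \<Rightarrow> nat \<Rightarrow> nat set list" where
  "remove_chain R k = map (\<lambda>r. if r \<le> k then row R r - {chain_col R k r} else row R r) [1..<length R + 1]"

lemma length_remove_chain [simp]: "length (remove_chain R k) = length R"
  by (simp add: remove_chain_def del: upt_Suc)

lemma row_remove_chain:
  "1 \<le> r \<Longrightarrow> r \<le> length R \<Longrightarrow>
    row (remove_chain R k) r = (if r \<le> k then row R r - {chain_col R k r} else row R r)"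
  by (simp add: remove_chain_def row_def del: upt_Suc)

lemma chain_col_top: "chain_col R k k = Min (row R k)"
  by (simp add: chain_col_def)

lemma chain_col_Suc:
  assumes "r < k"
  shows "chain_col R k r = cyclic_next (row R r) (chain_col R k (Suc r))"
proof -
  have "k - r = Suc (k - Suc r)" "k - Suc (k - Suc r) = r"
    using assms by simp_all
  then show ?thesis
    unfolding chain_col_def by simp
qed

lemma finite_balls: "decreasing_rows R \<Longrightarrow> finite (balls R)"
  unfolding decreasing_rows_def balls_def by auto

lemma card_row_antimono:
  assumes "decreasing_rows R" "1 \<le> r" "r \<le> s" "s \<le> length R"
  shows "card (row R s) \<le> card (row R r)"
  using assms(3,4)
proof (induction s)
  case (Suc s)
  show ?case
  proof (cases "r = Suc s")
    case False
    then have "card (row R (Suc s)) \<le> card (row R s)" "card (row R s) \<le> card (row R r)"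
      using Suc assms(1,2) unfolding decreasing_rows_def by auto
    then show ?thesis
      by simp
  qed simp
qed (use assms(2) in simp)

definition row_labels :: "nat set list \<Rightarrow> nat \<Rightarrow> nat \<Rightarrow> nat" where
  "row_labels M d j = (if fst (maj_state M d) j = 0 then length M - d else fst (maj_state M d) j)"

lemma maj_state_Suc:
  "maj_state M (Suc d) = label_row (row M (length M - d)) (row M (length M - d - 1)) (length M - d)
     (row_labels M d) (snd (maj_state M d))"
  unfolding label_row_def row_labels_def by (simp add: Let_def)

declare maj_state.simps(2) [simp del]

lemma label_row_empty [simp]: "label_row {} B r up m = (\<lambda>_. 0, m)"
  by (simp add: label_row_def)

lemma maj_state_empty_rows:
  assumes "d \<le> length M" "\<forall>r. length M - d < r \<longrightarrow> r \<le> length M \<longrightarrow> row M r = {}"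
  shows "maj_state M d = (\<lambda>_. 0, 0)"
  using assms by (induction d) (simp_all add: maj_state_Suc)

lemma maj_no_balls:
  assumes "balls M = {}"
  shows "maj M = 0"
proof -
  have "row M r = {}" if "1 \<le> r" "r \<le> length M" for r
    using that assms by (simp add: balls_def Sigma_empty_iff)
  then have "maj_state M (length M - 1) = (\<lambda>_. 0, 0)"
    by (intro maj_state_empty_rows) simp_all
  then show ?thesis
    by (simp add: maj_def)
qed

definition chain_invariant :: "nat set list \<Rightarrow> nat \<Rightarrow> nat \<Rightarrow> bool" where
  "chain_invariant R k d \<longleftrightarrow>
    (let r = length R - d; c = chain_col R k r in
      row_labels R d c = k \<and> (\<forall>j. row_labels R d j \<le> k)
      \<and> (\<forall>j. j \<noteq> c \<longrightarrow> row_labels (remove_chain R k) d j = row_labels R d j)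
      \<and> snd (maj_state R d) = snd (maj_state (remove_chain R k) d) + (\<Sum>r' = r + 1..k. chain_weight R k r'))"

context
  fixes R :: "nat set list" and k :: nat
  assumes dec: "decreasing_rows R" and ne: "balls R \<noteq> {}" and k: "k = top_row R"
begin

lemma top_row_in_rows: "1 \<le> k" "k \<le> length R" "row R k \<noteq> {}"
proof -
  have "{r \<in> {1..length R}. row R r \<noteq> {}} \<noteq> {}"
    using ne unfolding balls_def by auto
  then have "k \<in> {r \<in> {1..length R}. row R r \<noteq> {}}"
    unfolding k top_row_def by (intro Max_in) simp_all
  then show "1 \<le> k" "k \<le> length R" "row R k \<noteq> {}"
    by auto
qed

lemma row_above_top_row: "k < r \<Longrightarrow> r \<le> length R \<Longrightarrow> row R r = {}"
  using Max_ge[of "{r \<in> {1..length R}. row R r \<noteq> {}}" r] unfolding k top_row_def by fastforce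

lemma finite_row: "1 \<le> r \<Longrightarrow> r \<le> length R \<Longrightarrow> finite (row R r)"
  using dec unfolding decreasing_rows_def by auto

lemma row_below_top_row_ne: "1 \<le> r \<Longrightarrow> r \<le> k \<Longrightarrow> row R r \<noteq> {}"
  using card_row_antimono[OF dec, of r k] top_row_in_rows finite_row[of k] by fastforce

lemma chain_col_in_row: "1 \<le> r \<Longrightarrow> r \<le> k \<Longrightarrow> chain_col R k r \<in> row R r"
proof (induction "k - r" arbitrary: r)
  case 0
  then have "r = k" by simp
  then show ?case
    using top_row_in_rows finite_row[of k] by (simp add: chain_col_top)
next
  case (Suc d)
  then have "chain_col R k r = cyclic_next (row R r) (chain_col R k (Suc r))"
    by (intro chain_col_Suc) simp
  then show ?case
    using Suc.prems row_below_top_row_ne cyclic_next_in by simp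
qed

lemma balls_remove_chain: "balls (remove_chain R k) = balls R - (\<lambda>r. (r, chain_col R k r)) ` {1..k}"
  using top_row_in_rows by (auto simp: balls_def row_remove_chain split: if_splits)

lemma decreasing_rows_remove_chain: "decreasing_rows (remove_chain R k)"
  unfolding decreasing_rows_def
proof (intro conjI allI impI ballI)
  fix r
  assume "r \<in> {1..length (remove_chain R k)}"
  then show "finite (row (remove_chain R k) r)"
    using finite_row by (simp add: row_remove_chain)
next
  fix r
  assume r: "1 \<le> r" "r < length (remove_chain R k)"
  have "card (row R (Suc r)) \<le> card (row R r)"
    using dec r unfolding decreasing_rows_def by simp
  moreover have "row R (Suc r) = {}" if "k \<le> r"
    using that r row_above_top_row by simp
  ultimately show "card (row (remove_chain R k) (Suc r)) \<le> card (row (remove_chain R k) r)"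
    using r finite_row[of r] finite_row[of "Suc r"] chain_col_in_row[of r] chain_col_in_row[of "Suc r"]
    by (auto simp: row_remove_chain)
qed

lemma card_balls_remove_chain: "card (balls (remove_chain R k)) < card (balls R)"
proof -
  have "(k, chain_col R k k) \<in> balls R"
    using top_row_in_rows chain_col_in_row[of k] by (simp add: mem_balls)
  moreover have "k \<in> {1..k}"
    using top_row_in_rows by simp
  ultimately have "balls R - (\<lambda>r. (r, chain_col R k r)) ` {1..k} \<subset> balls R"
    by blast
  then show ?thesis
    unfolding balls_remove_chain using finite_balls[OF dec] by (rule psubset_card_mono[rotated])
qed

lemma chain_invariant_start: "chain_invariant R k (length R - k)"
proof -
  have "maj_state M (length R - k) = (\<lambda>_. 0, 0)" if "M \<in> {R, remove_chain R k}" for M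
    using that top_row_in_rows row_above_top_row
    by (intro maj_state_empty_rows) (auto simp: row_remove_chain)
  then show ?thesis
    using top_row_in_rows by (simp add: chain_invariant_def row_labels_def)
qed

lemma chain_invariant_Suc:
  assumes inv: "chain_invariant R k n" and r: "2 \<le> length R - n" "length R - n \<le> k"
  shows "chain_invariant R k (Suc n)"
proof -
  define r where "r = length R - n"
  define up where "up = row_labels R n"
  define up' where "up' = row_labels (remove_chain R k) n"
  have r: "2 \<le> r" "r \<le> k" "r \<le> length R" "length R - Suc n = r - 1"
    using r unfolding r_def by auto
  have IH: "up (chain_col R k r) = k" "\<forall>j. up j \<le> k" "\<forall>j. j \<noteq> chain_col R k r \<longrightarrow> up' j = up j"
    "snd (maj_state R n) = snd (maj_state (remove_chain R k) n) + (\<Sum>r' = r + 1..k. chain_weight R k r')"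
    using inv unfolding chain_invariant_def up_def up'_def r_def Let_def by simp_all
  have up_ne: "\<forall>j\<in>row R r. up j \<noteq> 0"
    using r(1) unfolding up_def row_labels_def r_def by auto
  have card: "card (row R r) \<le> card (row R (r - 1))"
    using r by (intro card_row_antimono[OF dec]) simp_all
  have fin: "finite (row R r)" "finite (row R (r - 1))" and col: "chain_col R k r \<in> row R r"
    using r finite_row chain_col_in_row by simp_all
  have next_col: "cyclic_next (row R (r - 1)) (chain_col R k r) = chain_col R k (r - 1)"
    using r chain_col_Suc[of "r - 1" k R] by simp
  note pair = label_row_Diff_pair[where r=r, OF fin col card IH(1-2) up_ne IH(3), unfolded next_col,
    folded chain_weight_def]
  have "maj_state R (Suc n) = label_row (row R r) (row R (r - 1)) r up (snd (maj_state R n))"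
    "maj_state (remove_chain R k) (Suc n) = label_row (row R r - {chain_col R k r})
       (row R (r - 1) - {chain_col R k (r - 1)}) r up' (snd (maj_state (remove_chain R k) n))"
    using r by (simp_all add: maj_state_Suc row_remove_chain up_def up'_def r_def)
  with pair[where m="snd (maj_state R n)" and m'="snd (maj_state (remove_chain R k) n)"]
  have new: "fst (maj_state (remove_chain R k) (Suc n)) = (fst (maj_state R (Suc n)))(chain_col R k (r - 1) := 0)"
    "fst (maj_state R (Suc n)) (chain_col R k (r - 1)) = k"
    "\<forall>j. fst (maj_state R (Suc n)) j \<le> k"
    "snd (maj_state R (Suc n)) + snd (maj_state (remove_chain R k) n) =
      snd (maj_state (remove_chain R k) (Suc n)) + snd (maj_state R n) + chain_weight R k r"
    by simp_all
  have "(\<Sum>r' = r..k. chain_weight R k r') = chain_weight R k r + (\<Sum>r' = r + 1..k. chain_weight R k r')"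
    using r by (simp add: sum.atLeast_Suc_atMost)
  with new IH(4) r show ?thesis
    by (auto simp: chain_invariant_def row_labels_def Let_def)
qed

lemma maj_remove_chain: "maj R = (\<Sum>r = 2..k. chain_weight R k r) + maj (remove_chain R k)"
proof -
  have "length R - k \<le> length R - 1"
    using top_row_in_rows by simp
  then have "chain_invariant R k (length R - 1)"
  proof (induction rule: dec_induct)
    case (step n)
    then show ?case
      using top_row_in_rows by (intro chain_invariant_Suc) auto
  qed (rule chain_invariant_start)
  moreover have "length R - (length R - 1) + 1 = 2"
    using top_row_in_rows by simp
  ultimately show ?thesis
    by (simp add: chain_invariant_def maj_def Let_def numeral_2_eq_2)
qed

end

section \<open>Charge of a column reading\<close>

lemma sorted_wrt_nth_less_iff:
  assumes "sorted_wrt P xs" "\<And>x y. P x y \<Longrightarrow> \<not> P y x" "i < length xs" "j < length xs"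
  shows "P (xs ! i) (xs ! j) \<longleftrightarrow> i < j"
  using assms sorted_wrt_nth_less[OF assms(1)] by (metis linorder_neqE_nat)

lemma sorted_wrt_distinct:
  assumes "sorted_wrt P xs" "\<And>x y. P x y \<Longrightarrow> \<not> P y x"
  shows "distinct xs"
  unfolding distinct_conv_nth
proof (intro allI impI)
  fix i j
  assume "i < length xs" "j < length xs" "i \<noteq> j"
  then have "P (xs ! i) (xs ! j) \<or> P (xs ! j) (xs ! i)"
    using sorted_wrt_nth_less[OF assms(1)] by (metis linorder_neqE_nat)
  then show "xs ! i \<noteq> xs ! j"
    using assms(2) by metis
qed

lemma perm_charge_of_positions:
  fixes p :: "nat \<Rightarrow> nat"
  assumes "\<And>i. i \<in> {1..k} \<Longrightarrow> g (p i) = i"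
  shows "perm_charge (map g (sorted_list_of_set (p ` {1..k}))) = (\<Sum>i = 1..<k. if p i < p (Suc i) then k - i else 0)"
proof -
  define sl where "sl = sorted_list_of_set (p ` {1..k})"
  have "inj_on p {1..k}"
    using assms by (rule inj_on_inverseI)
  then have len: "length (map g sl) = k"
    by (simp add: sl_def card_image)
  have set_sl: "set sl = p ` {1..k}" and sorted_sl: "sorted_wrt (<) sl"
    by (simp_all add: sl_def)
  have at: "x \<in> set sl \<Longrightarrow> g x = i \<Longrightarrow> x = p i" for x i
    using assms set_sl by auto
  have "(\<exists>a b. a < b \<and> b < length (map g sl) \<and> map g sl ! a = i \<and> map g sl ! b = Suc i)
      \<longleftrightarrow> p i < p (Suc i)" if i: "i \<in> {1..<k}" for i
  proof
    assume "\<exists>a b. a < b \<and> b < length (map g sl) \<and> map g sl ! a = i \<and> map g sl ! b = Suc i"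
    then obtain a b where "a < b" "b < length sl" "g (sl ! a) = i" "g (sl ! b) = Suc i"
      by auto
    then have "sl ! a < sl ! b" "sl ! a = p i" "sl ! b = p (Suc i)"
      using at sorted_wrt_nth_less[OF sorted_sl] by auto
    then show "p i < p (Suc i)"
      by simp
  next
    assume lt: "p i < p (Suc i)"
    have "p i \<in> set sl" "p (Suc i) \<in> set sl"
      using i set_sl by auto
    then obtain a b where ab: "a < length sl" "sl ! a = p i" "b < length sl" "sl ! b = p (Suc i)"
      by (metis in_set_conv_nth)
    then have "a < b"
      using lt sorted_wrt_nth_less_iff[OF sorted_sl less_not_sym, of a b] by simp
    moreover have "g (sl ! a) = i" "g (sl ! b) = Suc i"
      using ab i assms by auto
    ultimately show "\<exists>a b. a < b \<and> b < length (map g sl) \<and> map g sl ! a = i \<and> map g sl ! b = Suc i"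
      using ab by (intro exI[of _ a] exI[of _ b]) simp
  qed
  then show ?thesis
    unfolding perm_charge_def sl_def[symmetric] len by (intro sum.cong) auto
qed

definition column_before :: "nat \<times> nat \<Rightarrow> nat \<times> nat \<Rightarrow> bool" where
  "column_before b b' \<longleftrightarrow> snd b < snd b' \<or> (snd b = snd b' \<and> fst b' < fst b)"

lemma column_before_asym: "column_before b b' \<Longrightarrow> \<not> column_before b' b"
  unfolding column_before_def by auto

locale column_reading =
  fixes R0 :: "nat set list" and bs :: "(nat \<times> nat) list"
  assumes decreasing: "decreasing_rows R0"
    and set_bs: "set bs = balls R0"
    and sorted_bs: "sorted_wrt column_before bs"
begin

definition position :: "nat \<times> nat \<Rightarrow> nat" where
  "position = the_inv_into {..<length bs} ((!) bs)"

lemma bij_betw_nth_bs: "bij_betw ((!) bs) {..<length bs} (set bs)"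
  using sorted_wrt_distinct[OF sorted_bs column_before_asym] by (rule bij_betw_nth) simp_all

lemma bij_betw_position: "bij_betw position (set bs) {..<length bs}"
  unfolding position_def using bij_betw_nth_bs by (rule bij_betw_the_inv_into)

lemma nth_position: "b \<in> set bs \<Longrightarrow> bs ! position b = b"
  unfolding position_def using bij_betw_nth_bs by (rule f_the_inv_into_f_bij_betw)

lemma position_less_length: "b \<in> set bs \<Longrightarrow> position b < length bs"
  using bij_betw_position by (auto simp: bij_betw_def)

lemma letter_position: "b \<in> set bs \<Longrightarrow> map fst bs ! position b = fst b"
  by (simp add: nth_position position_less_length)

lemma position_less_iff:
  "b \<in> set bs \<Longrightarrow> b' \<in> set bs \<Longrightarrow> position b < position b' \<longleftrightarrow> column_before b b'"
  using sorted_wrt_nth_less_iff[OF sorted_bs column_before_asym, of "position b" "position b'"]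
  by (simp add: nth_position position_less_length)

lemma position_row_iff:
  assumes "balls R \<subseteq> balls R0"
  shows "p \<in> position ` balls R \<and> map fst bs ! p = i \<longleftrightarrow> (\<exists>c. (i, c) \<in> balls R \<and> p = position (i, c))"
proof
  assume "p \<in> position ` balls R \<and> map fst bs ! p = i"
  then obtain b where "b \<in> balls R" "p = position b" "fst b = i"
    using assms set_bs by (auto simp: letter_position)
  then show "\<exists>c. (i, c) \<in> balls R \<and> p = position (i, c)"
    by (metis prod.collapse)
next
  assume "\<exists>c. (i, c) \<in> balls R \<and> p = position (i, c)"
  then show "p \<in> position ` balls R \<and> map fst bs ! p = i"
    using assms set_bs by (auto simp: letter_position)
qed

lemma Least_position_row:
  assumes "balls R \<subseteq> balls R0" "(i, c0) \<in> balls R" "P c0" "\<And>c. (i, c) \<in> balls R \<Longrightarrow> P c \<Longrightarrow> c0 \<le> c"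
  shows "(LEAST p. \<exists>c. (i, c) \<in> balls R \<and> P c \<and> p = position (i, c)) = position (i, c0)"
proof (rule Least_equality)
  show "\<exists>c. (i, c) \<in> balls R \<and> P c \<and> position (i, c0) = position (i, c)"
    using assms(2,3) by blast
next
  fix p
  assume "\<exists>c. (i, c) \<in> balls R \<and> P c \<and> p = position (i, c)"
  then obtain c where c: "(i, c) \<in> balls R" "P c" "p = position (i, c)"
    by blast
  then have "c0 \<le> c" "(i, c) \<in> set bs" "(i, c0) \<in> set bs"
    using assms set_bs by auto
  then show "position (i, c0) \<le> p"
    using c(3) position_less_iff[of "(i, c0)" "(i, c)"] by (cases "c0 = c") (auto simp: column_before_def)
qed

lemma cyc_next_position:
  assumes sub: "balls R \<subseteq> balls R0" and i: "1 \<le> i" "i \<le> length R"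
    and c1: "(Suc i, c1) \<in> balls R" and ne: "row R i \<noteq> {}"
  shows "cyc_next (map fst bs) (position ` balls R) (position (Suc i, c1)) i = position (i, cyclic_next (row R i) c1)"
proof -
  define c0 where "c0 = cyclic_next (row R i) c1"
  have row_i: "(i, c) \<in> balls R \<longleftrightarrow> c \<in> row R i" for c
    using i by (simp add: mem_balls)
  have later: "position (Suc i, c1) < position (i, c) \<longleftrightarrow> c1 \<le> c" if "c \<in> row R i" for c
  proof -
    have "(Suc i, c1) \<in> set bs" "(i, c) \<in> set bs"
      using that c1 sub set_bs row_i by auto
    then show ?thesis
      using position_less_iff by (auto simp: column_before_def)
  qed
  have after: "p \<in> position ` balls R \<and> position (Suc i, c1) < p \<and> map fst bs ! p = i \<longleftrightarrow>
      (\<exists>c. (i, c) \<in> balls R \<and> c1 \<le> c \<and> p = position (i, c))" for p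
  proof
    assume p: "p \<in> position ` balls R \<and> position (Suc i, c1) < p \<and> map fst bs ! p = i"
    then obtain c where "(i, c) \<in> balls R" "p = position (i, c)"
      using position_row_iff[OF sub] by blast
    with p show "\<exists>c. (i, c) \<in> balls R \<and> c1 \<le> c \<and> p = position (i, c)"
      using later row_i by auto
  next
    assume "\<exists>c. (i, c) \<in> balls R \<and> c1 \<le> c \<and> p = position (i, c)"
    then obtain c where "(i, c) \<in> balls R" "c1 \<le> c" "p = position (i, c)"
      by blast
    then show "p \<in> position ` balls R \<and> position (Suc i, c1) < p \<and> map fst bs ! p = i"
      using position_row_iff[OF sub, of p i] later row_i by auto
  qed
  have any: "p \<in> position ` balls R \<and> map fst bs ! p = i \<longleftrightarrow>
      (\<exists>c. (i, c) \<in> balls R \<and> True \<and> p = position (i, c))" for p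
    using position_row_iff[OF sub, of p i] by simp
  have c0: "c0 \<in> row R i"
    "c1 \<le> c0 \<and> (\<forall>c\<in>row R i. c1 \<le> c \<longrightarrow> c0 \<le> c) \<or> (\<forall>c\<in>row R i. c < c1 \<and> c0 \<le> c)"
    using iffD1[OF cyclic_next_eq_iff[OF ne] c0_def[symmetric]] by blast+
  show ?thesis
  proof (cases "\<exists>c\<in>row R i. c1 \<le> c")
    case True
    then have ex: "\<exists>p\<in>position ` balls R. position (Suc i, c1) < p \<and> map fst bs ! p = i"
      using after row_i by blast
    have "cyc_next (map fst bs) (position ` balls R) (position (Suc i, c1)) i =
        (LEAST p. \<exists>c. (i, c) \<in> balls R \<and> c1 \<le> c \<and> p = position (i, c))"
      unfolding cyc_next_def if_P[OF ex] after ..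
    also have "\<dots> = position (i, c0)"
      using True c0 by (intro Least_position_row[OF sub]) (auto simp: row_i)
    finally show ?thesis
      unfolding c0_def .
  next
    case False
    then have nex: "\<not> (\<exists>p\<in>position ` balls R. position (Suc i, c1) < p \<and> map fst bs ! p = i)"
      using after row_i by blast
    have "cyc_next (map fst bs) (position ` balls R) (position (Suc i, c1)) i =
        (LEAST p. \<exists>c. (i, c) \<in> balls R \<and> True \<and> p = position (i, c))"
      unfolding cyc_next_def if_not_P[OF nex] any ..
    also have "\<dots> = position (i, c0)"
      using False c0 by (intro Least_position_row[OF sub]) (auto simp: row_i not_le)
    finally show ?thesis
      unfolding c0_def .
  qed
qed

context
  fixes R :: "nat set list" and k :: nat
  assumes sub: "balls R \<subseteq> balls R0" and dec: "decreasing_rows R" and ne: "balls R \<noteq> {}"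
    and k: "k = top_row R"
begin

lemma charge_chain_eq_position:
  "d < k \<Longrightarrow> charge_chain (map fst bs) (position ` balls R) k d = position (k - d, chain_col R k (k - d))"
proof (induction d)
  case 0
  have "(k, Min (row R k)) \<in> balls R" "\<And>c. (k, c) \<in> balls R \<Longrightarrow> True \<Longrightarrow> Min (row R k) \<le> c"
    using top_row_in_rows[OF dec ne k] finite_row[OF dec ne k] by (auto simp: mem_balls)
  from Least_position_row[where P="\<lambda>_. True", OF sub this(1) TrueI this(2)] show ?case
    using position_row_iff[OF sub] by (simp add: chain_col_top)
next
  case (Suc d)
  define i where "i = k - Suc d"
  have i: "1 \<le> i" "i < k" "k - d = Suc i" "i \<le> length R"
    using Suc.prems top_row_in_rows[OF dec ne k] unfolding i_def by auto
  have "(Suc i, chain_col R k (Suc i)) \<in> balls R"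
    using i chain_col_in_row[OF dec ne k, of "Suc i"] top_row_in_rows[OF dec ne k] by (simp add: mem_balls)
  from cyc_next_position[OF sub i(1,4) this row_below_top_row_ne[OF dec ne k i(1)]] i(2)
  show ?case
    using Suc i(3) by (simp add: i_def[symmetric] chain_col_Suc)
qed

lemma chain_ball_in_set:
  assumes "r \<in> {1..k}"
  shows "(r, chain_col R k r) \<in> set bs"
proof -
  have "(r, chain_col R k r) \<in> balls R"
    using assms chain_col_in_row[OF dec ne k, of r] top_row_in_rows[OF dec ne k] by (simp add: mem_balls)
  then show ?thesis
    using sub set_bs by blast
qed

lemma Max_letters: "Max ((!) (map fst bs) ` position ` balls R) = k"
proof -
  have "(!) (map fst bs) ` position ` balls R = fst ` balls R"
    using sub set_bs by (force simp: image_image letter_position intro: image_cong)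
  also have "\<dots> = {r \<in> {1..length R}. row R r \<noteq> {}}"
    by (force simp: balls_def)
  finally show ?thesis
    by (simp add: k top_row_def)
qed

lemma charge_chain_image:
  "charge_chain (map fst bs) (position ` balls R) k ` {..<k} = (\<lambda>r. position (r, chain_col R k r)) ` {1..k}"
proof -
  have "charge_chain (map fst bs) (position ` balls R) k ` {..<k} =
      (\<lambda>d. position (k - d, chain_col R k (k - d))) ` {..<k}"
    by (rule image_cong) (simp_all add: charge_chain_eq_position)
  also have "\<dots> = (\<lambda>r. position (r, chain_col R k r)) ` (\<lambda>d. k - d) ` {..<k}"
    by (simp add: image_image)
  also have "(\<lambda>d. k - d) ` {..<k} = {1..k}"
  proof
    show "{1..k} \<subseteq> (\<lambda>d. k - d) ` {..<k}"
    proof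
      fix r
      assume "r \<in> {1..k}"
      then have "r = k - (k - r)" "k - r < k"
        by auto
      then show "r \<in> (\<lambda>d. k - d) ` {..<k}"
        by blast
    qed
  qed auto
  finally show ?thesis .
qed

lemma perm_charge_chain:
  "perm_charge (map ((!) (map fst bs)) (sorted_list_of_set ((\<lambda>r. position (r, chain_col R k r)) ` {1..k})))
    = (\<Sum>r = 2..k. chain_weight R k r)"
proof -
  have "perm_charge (map ((!) (map fst bs)) (sorted_list_of_set ((\<lambda>r. position (r, chain_col R k r)) ` {1..k})))
    = (\<Sum>i = 1..<k. if position (i, chain_col R k i) < position (Suc i, chain_col R k (Suc i)) then k - i else 0)"
    using chain_ball_in_set by (intro perm_charge_of_positions) (simp add: letter_position)
  also have "\<dots> = (\<Sum>i = 1..<k. chain_weight R k (Suc i))"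
    using chain_ball_in_set by (intro sum.cong) (auto simp: position_less_iff column_before_def chain_weight_def)
  also have "\<dots> = (\<Sum>r = 2..k. chain_weight R k r)"
    by (simp add: sum.shift_bounds_Suc_ivl[symmetric] atLeastLessThanSuc_atLeastAtMost numeral_2_eq_2)
  finally show ?thesis .
qed

lemma positions_remove_chain:
  "position ` balls R - (\<lambda>r. position (r, chain_col R k r)) ` {1..k} = position ` balls (remove_chain R k)"
proof -
  have "inj_on position (set bs)"
    using bij_betw_position by (rule bij_betw_imp_inj_on)
  moreover have "(\<lambda>r. (r, chain_col R k r)) ` {1..k} \<subseteq> set bs"
    using chain_ball_in_set by blast
  moreover have "balls R - (\<lambda>r. (r, chain_col R k r)) ` {1..k} \<subseteq> set bs"
    using sub set_bs by blast
  ultimately show ?thesis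
    unfolding balls_remove_chain[OF dec ne k] by (simp add: inj_on_image_set_diff image_image)
qed

end

lemma charge_aux_eq_maj:
  assumes "balls R \<subseteq> balls R0" "decreasing_rows R" "card (balls R) \<le> f"
  shows "charge_aux (map fst bs) f (position ` balls R) = maj R"
  using assms
proof (induction f arbitrary: R)
  case 0
  then have "balls R = {}"
    using finite_balls by auto
  then show ?case
    by (simp add: maj_no_balls)
next
  case (Suc f)
  show ?case
  proof (cases "balls R = {}")
    case True
    then show ?thesis
      by (simp add: maj_no_balls)
  next
    case False
    define k where "k = top_row R"
    note ctxt = Suc.prems(1,2) False k_def
    have "card (balls (remove_chain R k)) \<le> f"
      using card_balls_remove_chain[OF Suc.prems(2) False k_def] Suc.prems(3) by simp
    then have "charge_aux (map fst bs) f (position ` balls (remove_chain R k)) = maj (remove_chain R k)"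
      using Suc.prems(1) balls_remove_chain[OF Suc.prems(2) False k_def]
        decreasing_rows_remove_chain[OF Suc.prems(2) False k_def]
      by (intro Suc.IH) auto
    then show ?thesis
      using False Max_letters[OF ctxt] charge_chain_image[OF ctxt] perm_charge_chain[OF ctxt]
        positions_remove_chain[OF ctxt] maj_remove_chain[OF Suc.prems(2) False k_def]
      by (simp add: Let_def)
  qed
qed

lemma charge_eq_maj: "charge (map fst bs) = maj R0"
proof -
  have "{..<length bs} = position ` balls R0"
    using bij_betw_position set_bs by (simp add: bij_betw_def)
  moreover have "length bs = card (balls R0)"
    using bij_betw_same_card[OF bij_betw_nth_bs] set_bs by simp
  ultimately show ?thesis
    using charge_aux_eq_maj[OF order_refl decreasing] by (simp add: charge_def)
qed

end

section \<open>Multiline queues\<close>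

definition column_balls :: "nat set list \<Rightarrow> nat \<Rightarrow> (nat \<times> nat) list" where
  "column_balls M n =
    concat (map (\<lambda>c. map (\<lambda>r. (r, c)) (filter (\<lambda>r. c \<in> row M r) (rev [1..<length M + 1]))) [1..<n + 1])"

lemma col_word_eq_map_fst: "col_word M n = map fst (column_balls M n)"
  unfolding col_word_def column_balls_def by (simp add: map_concat comp_def)

lemma set_column_balls:
  assumes "\<forall>r\<in>{1..length M}. row M r \<subseteq> {1..n}"
  shows "set (column_balls M n) = balls M"
proof
  show "set (column_balls M n) \<subseteq> balls M"
    by (auto simp: column_balls_def balls_def simp del: upt_Suc)
  show "balls M \<subseteq> set (column_balls M n)"
  proof
    fix b
    assume "b \<in> balls M"
    then obtain r c where b: "b = (r, c)" "r \<in> {1..length M}" "c \<in> row M r"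
      by (auto simp: balls_def)
    moreover have "c \<in> {1..n}"
      using assms b by blast
    ultimately show "b \<in> set (column_balls M n)"
      by (auto simp: column_balls_def simp del: upt_Suc intro!: bexI[of _ c])
  qed
qed

lemma sorted_column_balls: "sorted_wrt column_before (column_balls M n)"
proof (induction n)
  case (Suc n)
  define col where "col = map (\<lambda>r. (r, Suc n)) (filter (\<lambda>r. Suc n \<in> row M r) (rev [1..<length M + 1]))"
  have "column_balls M (Suc n) = column_balls M n @ col"
    by (simp add: column_balls_def col_def del: upt_Suc) simp
  moreover have "sorted_wrt column_before col"
    by (auto simp: col_def sorted_wrt_map sorted_wrt_rev column_before_def intro: sorted_wrt_filter)
  moreover have "column_before b b'" if "b \<in> set (column_balls M n)" "b' \<in> set col" for b b'
    using that by (auto simp: column_balls_def col_def column_before_def simp del: upt_Suc)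
  ultimately show ?case
    using Suc by (simp add: sorted_wrt_append)
qed (simp add: column_balls_def)

lemma MLQ_decreasing_rows:
  assumes "M \<in> MLQ lam n"
  shows "decreasing_rows M" "\<forall>r\<in>{1..length M}. row M r \<subseteq> {1..n}"
proof -
  have rows: "length M = first_part lam"
    "\<forall>r\<in>{1..length M}. row M r \<subseteq> {1..n} \<and> card (row M r) = conj_part lam r"
    using assms unfolding MLQ_def row_def by auto
  then show "\<forall>r\<in>{1..length M}. row M r \<subseteq> {1..n}"
    by blast
  have "conj_part lam (Suc r) \<le> conj_part lam r" for r
    unfolding conj_part_def by (induction lam) auto
  with rows show "decreasing_rows M"
    unfolding decreasing_rows_def by (auto intro: finite_subset)
qed

theorem theorem3p17:
  fixes lam :: "nat list" and n :: nat and M :: "nat set list"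
  assumes "is_partition lam"
    and "length lam \<le> n"
    and "M \<in> MLQ lam n"
  shows "maj M = charge (col_word M n)"
proof -
  interpret column_reading M "column_balls M n"
    using MLQ_decreasing_rows[OF assms(3)] set_column_balls sorted_column_balls by unfold_locales simp_all
  show ?thesis
    by (simp add: col_word_eq_map_fst charge_eq_maj)
qed

end
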